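(* Consider the two-unicast wireline network ("butterfly network with co-located sinks") with nodes $\mathsf{S}_1,\mathsf{S}_2,\mathsf{M}_1,\mathsf{M}_2,\mathsf{D}$, where the single destination node $\mathsf{D}$ must decode both $W_1$ (from $\mathsf{S}_1$) and $W_2$ (from $\mathsf{S}_2$), and directed edges: edge 1 from $\mathsf{S}_1$ to $\mathsf{M}_1$, edge 2 from $\mathsf{S}_2$ to $\mathsf{M}_1$, edge 3 from $\mathsf{M}_1$ to $\mathsf{M}_2$, edge 4 from $\mathsf{S}_1$ to $\mathsf{D}$, edge 5 from $\mathsf{S}_2$ to $\mathsf{D}$, and one edge from $\mathsf{M}_2$ to $\mathsf{D}$ of capacity $\mathsf{C}_6+\mathsf{C}_7$, where edge $i$ has capacity $\mathsf{C}_i\ge0$ and $\mathsf{C}_6,\mathsf{C}_7\ge0$. Then every nonnegative rate pair $(R_1,R_2)$ satisfying $$R_1\le \mathsf{C}_1+\min\{R_1,\mathsf{C}_4\},\quad R_2\le \mathsf{C}_2+\min\{R_2,\mathsf{C}_5\},$$ $$R_1+R_2\le \min\{\mathsf{C}_3,\mathsf{C}_6+\mathsf{C}_7\}+\min\{R_2,\mathsf{C}_5\}+\min\{R_1,\mathsf{C}_4\}$$ is achievable (without security constraints).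
   Context: Network model: a directed acyclic graph; each edge $e$ is a noiseless orthogonal channel of capacity $\mathsf{C}_e$ carrying symbols over $\mathbb{F}_q$; over $n$ channel uses edge $e$ carries $X_e^n$, received as $Y_e^n=X_e^n$. Source $\mathsf{S}_i$ has message $W_i$ (uniform, $q$-ary entropy $nR_i$, $W_1,W_2$ independent). A rate pair is achievable if for some block length $n$ there are encoding functions—an edge leaving $\mathsf{S}_i$ carries a function of $W_i$, any other edge a function of the symbols received on the incoming edges of its tail—and decoding functions at $\mathsf{D}$ (functions of the symbols on its incoming edges) recovering both $W_1$ and $W_2$ with vanishing error probability. *)

theory Defs
  imports Complex_Main "HOL-Computational_Algebra.Primes"
begin

text \<open>
Over a block of n channel uses, an edge of capacity C carries
floor(n*C) q-ary symbols, i.e. one value of the set {0..<q^floor(n*C)}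
(a word of floor(n*C) q-ary symbols, encoded as a natural number).
Message W_i is uniform on {0..<M_i}; messages are independent.
\<close>

definition edge_syms :: "nat \<Rightarrow> real \<Rightarrow> nat" where
  "edge_syms n C = nat \<lfloor>real n * C\<rfloor>"

definition in_alph :: "nat \<Rightarrow> nat \<Rightarrow> real \<Rightarrow> nat \<Rightarrow> bool" where
  "in_alph q n C x \<longleftrightarrow> x < q ^ edge_syms n C"

definition butterfly_code ::
  "nat \<Rightarrow> real \<Rightarrow> real \<Rightarrow> real \<Rightarrow> real \<Rightarrow> real \<Rightarrow> real \<Rightarrow> real \<Rightarrow>
   nat \<Rightarrow> nat \<Rightarrow> nat \<Rightarrow>
   (nat \<Rightarrow> nat) \<Rightarrow> (nat \<Rightarrow> nat) \<Rightarrow> (nat \<Rightarrow> nat \<Rightarrow> nat) \<Rightarrow>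
   (nat \<Rightarrow> nat) \<Rightarrow> (nat \<Rightarrow> nat) \<Rightarrow> (nat \<Rightarrow> nat) \<Rightarrow>
   (nat \<Rightarrow> nat \<Rightarrow> nat \<Rightarrow> nat) \<Rightarrow> (nat \<Rightarrow> nat \<Rightarrow> nat \<Rightarrow> nat) \<Rightarrow> bool" where
  "butterfly_code q C1 C2 C3 C4 C5 C6 C7 n M1 M2 f1 f2 f3 f4 f5 f6 g1 g2 \<longleftrightarrow>
     (\<forall>w1<M1. in_alph q n C1 (f1 w1) \<and> in_alph q n C4 (f4 w1)) \<and>
     (\<forall>w2<M2. in_alph q n C2 (f2 w2) \<and> in_alph q n C5 (f5 w2)) \<and>
     (\<forall>x1 x2. in_alph q n C1 x1 \<longrightarrow> in_alph q n C2 x2 \<longrightarrow> in_alph q n C3 (f3 x1 x2)) \<and>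
     (\<forall>x3. in_alph q n C3 x3 \<longrightarrow> in_alph q n (C6 + C7) (f6 x3))"

definition butterfly_errors ::
  "nat \<Rightarrow> nat \<Rightarrow>
   (nat \<Rightarrow> nat) \<Rightarrow> (nat \<Rightarrow> nat) \<Rightarrow> (nat \<Rightarrow> nat \<Rightarrow> nat) \<Rightarrow>
   (nat \<Rightarrow> nat) \<Rightarrow> (nat \<Rightarrow> nat) \<Rightarrow> (nat \<Rightarrow> nat) \<Rightarrow>
   (nat \<Rightarrow> nat \<Rightarrow> nat \<Rightarrow> nat) \<Rightarrow> (nat \<Rightarrow> nat \<Rightarrow> nat \<Rightarrow> nat) \<Rightarrow> nat" where
  "butterfly_errors M1 M2 f1 f2 f3 f4 f5 f6 g1 g2 =
     card {(w1, w2). w1 < M1 \<and> w2 < M2 \<and>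
        (let y4 = f4 w1; y5 = f5 w2; y6 = f6 (f3 (f1 w1) (f2 w2))
         in g1 y4 y5 y6 \<noteq> w1 \<or> g2 y4 y5 y6 \<noteq> w2)}"

definition butterfly_achievable ::
  "nat \<Rightarrow> real \<Rightarrow> real \<Rightarrow> real \<Rightarrow> real \<Rightarrow> real \<Rightarrow> real \<Rightarrow> real \<Rightarrow> real \<Rightarrow> real \<Rightarrow> bool" where
  "butterfly_achievable q C1 C2 C3 C4 C5 C6 C7 R1 R2 \<longleftrightarrow>
     (\<forall>\<epsilon>>0. \<exists>n M1 M2 f1 f2 f3 f4 f5 f6 g1 g2.
        n > 0 \<and> M1 > 0 \<and> M2 > 0 \<and>
        log (real q) (real M1) \<ge> real n * (R1 - \<epsilon>) \<and>
        log (real q) (real M2) \<ge> real n * (R2 - \<epsilon>) \<and>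
        butterfly_code q C1 C2 C3 C4 C5 C6 C7 n M1 M2 f1 f2 f3 f4 f5 f6 g1 g2 \<and>
        real (butterfly_errors M1 M2 f1 f2 f3 f4 f5 f6 g1 g2)
          \<le> \<epsilon> * (real M1 * real M2))"

end

theory Submission
  imports Defs
begin

text \<open>Plain routing suffices. Split W1 into a low part of rate min R1 C4, sent on
the direct edge 4, and a high part of rate R1 - min R1 C4, sent on edge 1; likewise for
W2 with edges 5 and 2. The relay M1 concatenates the two high parts, and the sum
constraint says exactly that the concatenation fits through edge 3 and the edge
M2 -> D. Messages and symbols are numbers below powers of q, so splitting and
concatenating are div/mod by powers of q, and the code never errs.\<close>

lemma add_mult_less_mult:
  fixes a b A B :: nat
  assumes "a < A" "b < B"
  shows "a + A * b < A * B"
proof -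
  have "A * (b + 1) \<le> A * B" using assms(2) by (intro mult_le_mono2) simp
  thus ?thesis using assms(1) by (simp add: algebra_simps)
qed

lemma div_power_less_power:
  fixes q w :: nat
  assumes "w < q ^ (k + l)"
  shows "w div q ^ k < q ^ l"
  using assms by (simp add: less_mult_imp_div_less power_add mult.commute)

lemma in_alph_if_less_power:
  assumes "q \<ge> 1" "x < q ^ l" "l \<le> edge_syms n C"
  shows "in_alph q n C x"
  unfolding in_alph_def using assms power_increasing[of l "edge_syms n C" q] by linarith

lemma edge_syms_ge:
  assumes "x \<le> C"
  shows "nat \<lfloor>real n * x\<rfloor> \<le> edge_syms n C"
  unfolding edge_syms_def using assms by (intro nat_mono floor_mono mult_left_mono) simp_all

lemma edge_syms_add_ge:
  assumes "x \<ge> 0" "y \<ge> 0" "x + y \<le> C"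
  shows "nat \<lfloor>real n * x\<rfloor> + nat \<lfloor>real n * y\<rfloor> \<le> edge_syms n C"
proof -
  have "\<lfloor>real n * x\<rfloor> + \<lfloor>real n * y\<rfloor> \<le> \<lfloor>real n * x + real n * y\<rfloor>"
    by (rule le_floor_add)
  also have "\<dots> \<le> \<lfloor>real n * C\<rfloor>"
    using assms(3) by (intro floor_mono) (simp add: mult_left_mono flip: distrib_left)
  finally show ?thesis
    unfolding edge_syms_def using assms by (simp add: nat_add_distrib[symmetric] nat_mono)
qed

lemma real_nat_floor_ge:
  fixes x :: real
  assumes "x \<ge> 0"
  shows "real (nat \<lfloor>x\<rfloor>) \<ge> x - 1"
  using assms by (simp add: of_nat_nat)

lemma butterfly_code_routing:
  fixes q :: nat
  assumes q: "q \<ge> 1"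
    and "k1 \<le> edge_syms n C4" and "l1 \<le> edge_syms n C1"
    and "k2 \<le> edge_syms n C5" and "l2 \<le> edge_syms n C2"
    and "l1 + l2 \<le> edge_syms n C3" and "l1 + l2 \<le> edge_syms n (C6 + C7)"
  shows "butterfly_code q C1 C2 C3 C4 C5 C6 C7 n (q ^ (k1 + l1)) (q ^ (k2 + l2))
     (\<lambda>w. w div q ^ k1) (\<lambda>w. w div q ^ k2) (\<lambda>x y. x mod q ^ l1 + q ^ l1 * (y mod q ^ l2))
     (\<lambda>w. w mod q ^ k1) (\<lambda>w. w mod q ^ k2) (\<lambda>x. x mod q ^ (l1 + l2)) g1 g2"
proof -
  have pos: "0 < q ^ m" for m using q by simp
  have concat: "x mod q ^ l1 + q ^ l1 * (y mod q ^ l2) < q ^ (l1 + l2)" for x y :: nat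
    unfolding power_add by (intro add_mult_less_mult mod_less_divisor pos)
  show ?thesis
    unfolding butterfly_code_def
    using assms concat pos
    by (auto intro!: in_alph_if_less_power div_power_less_power)
qed

lemma butterfly_errors_routing:
  fixes q :: nat
  assumes "q \<ge> 1"
  shows "butterfly_errors (q ^ (k1 + l1)) (q ^ (k2 + l2))
     (\<lambda>w. w div q ^ k1) (\<lambda>w. w div q ^ k2) (\<lambda>x y. x mod q ^ l1 + q ^ l1 * (y mod q ^ l2))
     (\<lambda>w. w mod q ^ k1) (\<lambda>w. w mod q ^ k2) (\<lambda>x. x mod q ^ (l1 + l2))
     (\<lambda>y4 y5 y6. y4 + q ^ k1 * (y6 mod q ^ l1)) (\<lambda>y4 y5 y6. y5 + q ^ k2 * (y6 div q ^ l1)) = 0"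
proof -
  have decoded: "w1 mod q ^ k1 + q ^ k1 * (y mod q ^ (l1 + l2) mod q ^ l1) = w1 \<and>
                 w2 mod q ^ k2 + q ^ k2 * (y mod q ^ (l1 + l2) div q ^ l1) = w2"
    if "w1 < q ^ (k1 + l1)" "w2 < q ^ (k2 + l2)"
      and y: "y = w1 div q ^ k1 mod q ^ l1 + q ^ l1 * (w2 div q ^ k2 mod q ^ l2)" for w1 w2 y
  proof -
    have hi1: "w1 div q ^ k1 < q ^ l1" and hi2: "w2 div q ^ k2 < q ^ l2"
      using that by (simp_all add: div_power_less_power)
    have y_digits: "y = w1 div q ^ k1 + q ^ l1 * (w2 div q ^ k2)"
      using y hi1 hi2 by simp
    moreover have "y < q ^ (l1 + l2)"
      unfolding power_add y_digits using hi1 hi2 by (rule add_mult_less_mult)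
    ultimately show ?thesis
      using hi1 assms by (simp add: mod_mult_div_eq)
  qed
  show ?thesis
    unfolding butterfly_errors_def Let_def by (auto simp: card_eq_0_iff dest: decoded)
qed

lemma butterfly_achievable_rate_split:
  fixes q :: nat and a b r1 r2 :: real
  assumes q: "q \<ge> 2"
    and nonneg: "a \<ge> 0" "r1 \<ge> 0" "b \<ge> 0" "r2 \<ge> 0"
    and direct: "a \<le> C4" "b \<le> C5"
    and relayed: "r1 \<le> C1" "r2 \<le> C2" "r1 + r2 \<le> C3" "r1 + r2 \<le> C6 + C7"
  shows "butterfly_achievable q C1 C2 C3 C4 C5 C6 C7 (a + r1) (b + r2)"
  unfolding butterfly_achievable_def
proof (intro allI impI)
  fix eps :: real assume eps: "eps > 0"
  define n :: nat where "n = nat \<lceil>2 / eps\<rceil> + 1"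
  have "real n > 2 / eps" unfolding n_def by linarith
  hence neps: "real n * eps > 2" using eps by (simp add: field_simps)
  define k1 where "k1 = nat \<lfloor>real n * a\<rfloor>"
  define l1 where "l1 = nat \<lfloor>real n * r1\<rfloor>"
  define k2 where "k2 = nat \<lfloor>real n * b\<rfloor>"
  define l2 where "l2 = nat \<lfloor>real n * r2\<rfloor>"
  have code: "butterfly_code q C1 C2 C3 C4 C5 C6 C7 n (q ^ (k1 + l1)) (q ^ (k2 + l2))
     (\<lambda>w. w div q ^ k1) (\<lambda>w. w div q ^ k2) (\<lambda>x y. x mod q ^ l1 + q ^ l1 * (y mod q ^ l2))
     (\<lambda>w. w mod q ^ k1) (\<lambda>w. w mod q ^ k2) (\<lambda>x. x mod q ^ (l1 + l2))
     (\<lambda>y4 y5 y6. y4 + q ^ k1 * (y6 mod q ^ l1)) (\<lambda>y4 y5 y6. y5 + q ^ k2 * (y6 div q ^ l1))"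
    unfolding k1_def l1_def k2_def l2_def using q nonneg direct relayed
    by (intro butterfly_code_routing edge_syms_ge edge_syms_add_ge) simp_all
  have rate1: "real n * (a + r1 - eps) \<le> real (k1 + l1)"
    using real_nat_floor_ge[of "real n * a"] real_nat_floor_ge[of "real n * r1"] nonneg neps
    unfolding k1_def l1_def by (simp add: algebra_simps)
  have rate2: "real n * (b + r2 - eps) \<le> real (k2 + l2)"
    using real_nat_floor_ge[of "real n * b"] real_nat_floor_ge[of "real n * r2"] nonneg neps
    unfolding k2_def l2_def by (simp add: algebra_simps)
  have log_power: "log (real q) (real (q ^ m)) = real m" for m
    using q by (simp add: log_nat_power)
  show "\<exists>n M1 M2 f1 f2 f3 f4 f5 f6 g1 g2. n > 0 \<and> M1 > 0 \<and> M2 > 0 \<and>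
        log (real q) (real M1) \<ge> real n * (a + r1 - eps) \<and>
        log (real q) (real M2) \<ge> real n * (b + r2 - eps) \<and>
        butterfly_code q C1 C2 C3 C4 C5 C6 C7 n M1 M2 f1 f2 f3 f4 f5 f6 g1 g2 \<and>
        real (butterfly_errors M1 M2 f1 f2 f3 f4 f5 f6 g1 g2) \<le> eps * (real M1 * real M2)"
    apply (rule exI[of _ n], rule exI[of _ "q ^ (k1 + l1)"], rule exI[of _ "q ^ (k2 + l2)"], (rule exI)+)
    using code rate1 rate2 log_power butterfly_errors_routing[of q k1 l1 k2 l2] q eps
    unfolding n_def by auto
qed

theorem theorem5:
  fixes q :: nat and C1 C2 C3 C4 C5 C6 C7 R1 R2 :: real
  assumes "\<exists>p k. prime p \<and> k > 0 \<and> q = p ^ k"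
    and "C1 \<ge> 0" "C2 \<ge> 0" "C3 \<ge> 0" "C4 \<ge> 0" "C5 \<ge> 0" "C6 \<ge> 0" "C7 \<ge> 0"
    and "R1 \<ge> 0" "R2 \<ge> 0"
    and "R1 \<le> C1 + min R1 C4"
    and "R2 \<le> C2 + min R2 C5"
    and "R1 + R2 \<le> min C3 (C6 + C7) + min R2 C5 + min R1 C4"
  shows "butterfly_achievable q C1 C2 C3 C4 C5 C6 C7 R1 R2"
proof -
  obtain p k where "prime p" "k > 0" "q = p ^ k" using assms(1) by blast
  hence "q \<ge> p" by (simp add: self_le_power prime_gt_0_nat[of p] Suc_leI)
  hence q: "q \<ge> 2" using prime_ge_2_nat[OF \<open>prime p\<close>] by linarith
  have "butterfly_achievable q C1 C2 C3 C4 C5 C6 C7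
          (min R1 C4 + (R1 - min R1 C4)) (min R2 C5 + (R2 - min R2 C5))"
    using assms(2-) by (intro butterfly_achievable_rate_split q) (auto simp: min_def split: if_splits)
  thus ?thesis by simp
qed

end
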